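(* Let $G$ be a 3-connected graph, $d\ge 3$, and let $G''$ be the $G_d^0$-blocked graph of $G$. If $G''$ is the overlap graph of a family of subtrees of a tree $T$ that has exactly $k=d$ leaves and has no node whose degree is greater than two but less than $d$, then $G$ is $k$-colourable.
   Context: Two sets $a,b$ overlap if $a\cap b\neq\emptyset$, $a\setminus b\neq\emptyset$, $b\setminus a\neq\emptyset$; the overlap graph of a family of subtrees (nonempty connected node sets) of a tree has one vertex per subtree, adjacent iff the subtrees overlap. $G_d^0$ ($d\ge3$): vertices $v_s,v_b$ joined by $d$ internally disjoint three-vertex paths $v_s-x_i-v_b$, no other edges. The $G_d^0$-blocked graph $G''$ of $G$: let $G'=(V',E')$ be the disjoint union of six copies of $G$. The vertex set of $G''$ is $V_1\cup V_2\cup V_3\cup V_4$ (pairwise disjoint), where $V_1=V'$, $V_2$ contains one new vertex for each edge of $E'$ (edge-representatives), $V_3=\{f(v): v\in V_1\}$ is a set of new vertices in bijection $f$ with $V_1$, and $V_4$ is the vertex set of a copy of $G_d^0$. Edges of $G''$: $v\in V_1$ is adjacent to the edge-representative of $e\in E'$ iff $v$ is an endpoint of $e$; $V_2\cup V_3$ is a clique; each $v\in V_1$ is adjacent to $f(v)$; every vertex of $V_2\cup V_3$ is adjacent to $v_s$ and $v_b$; the edges of $G_d^0$; no other edges. *)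

theory Defs
  imports Main
begin

definition simple_graph :: "'a set \<Rightarrow> 'a set set \<Rightarrow> bool" where
  "simple_graph V E \<longleftrightarrow> finite V \<and>
     (\<forall>e\<in>E. \<exists>u v. e = {u, v} \<and> u \<noteq> v \<and> u \<in> V \<and> v \<in> V)"

definition adj_rel :: "'a set \<Rightarrow> 'a set set \<Rightarrow> ('a \<times> 'a) set" where
  "adj_rel V E = {(x, y). {x, y} \<in> E \<and> x \<in> V \<and> y \<in> V}"

definition connected_graph :: "'a set \<Rightarrow> 'a set set \<Rightarrow> bool" where
  "connected_graph V E \<longleftrightarrow> V \<noteq> {} \<and> (\<forall>u\<in>V. \<forall>v\<in>V. (u, v) \<in> (adj_rel V E)\<^sup>*)"

definition k_connected :: "nat \<Rightarrow> 'a set \<Rightarrow> 'a set set \<Rightarrow> bool" where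
  "k_connected k V E \<longleftrightarrow> card V > k \<and>
     (\<forall>X. X \<subseteq> V \<and> card X < k \<longrightarrow> connected_graph (V - X) {e\<in>E. e \<inter> X = {}})"

definition colourable :: "nat \<Rightarrow> 'a set \<Rightarrow> 'a set set \<Rightarrow> bool" where
  "colourable k V E \<longleftrightarrow> (\<exists>c :: 'a \<Rightarrow> nat. (\<forall>v\<in>V. c v < k) \<and>
     (\<forall>u\<in>V. \<forall>v\<in>V. {u, v} \<in> E \<longrightarrow> c u \<noteq> c v))"

definition has_cycle :: "'a set \<Rightarrow> 'a set set \<Rightarrow> bool" where
  "has_cycle V E \<longleftrightarrow> (\<exists>cs. length cs \<ge> 3 \<and> distinct cs \<and> set cs \<subseteq> V \<and>
     (\<forall>i<length cs. {cs ! i, cs ! ((i + 1) mod length cs)} \<in> E))"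

definition is_tree :: "'a set \<Rightarrow> 'a set set \<Rightarrow> bool" where
  "is_tree N F \<longleftrightarrow> simple_graph N F \<and> connected_graph N F \<and> \<not> has_cycle N F"

definition degree :: "'a set set \<Rightarrow> 'a \<Rightarrow> nat" where
  "degree F v = card {u. {u, v} \<in> F}"

definition leaves :: "'a set \<Rightarrow> 'a set set \<Rightarrow> 'a set" where
  "leaves N F = {v\<in>N. degree F v = 1}"

definition subtree :: "'a set \<Rightarrow> 'a set set \<Rightarrow> 'a set \<Rightarrow> bool" where
  "subtree N F S \<longleftrightarrow> S \<subseteq> N \<and> connected_graph S {e\<in>F. e \<subseteq> S}"

definition overlap :: "'a set \<Rightarrow> 'a set \<Rightarrow> bool" where
  "overlap a b \<longleftrightarrow> a \<inter> b \<noteq> {} \<and> a - b \<noteq> {} \<and> b - a \<noteq> {}"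

definition overlap_graph_of_subtrees :: "'v set \<Rightarrow> 'v set set \<Rightarrow> 'n set \<Rightarrow> 'n set set \<Rightarrow> bool" where
  "overlap_graph_of_subtrees V E N F \<longleftrightarrow> (\<exists>S :: 'v \<Rightarrow> 'n set.
     (\<forall>x\<in>V. subtree N F (S x)) \<and>
     (\<forall>x\<in>V. \<forall>y\<in>V. x \<noteq> y \<longrightarrow> ({x, y} \<in> E \<longleftrightarrow> overlap (S x) (S y))))"

text \<open>Vertices: Cp i v = copy i (i<6) of vertex v (V1); ER e = edge representative of
  edge e of E' (V2); Fv i v = f(Cp i v) (V3); Vs, Vb, Xi j (j<d) = the copy of G_d^0 (V4).\<close>
datatype 'a bvert = Cp nat 'a | ER "(nat \<times> 'a) set" | Fv nat 'a | Vs | Vb | Xi nat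

definition copy_edges :: "'a set set \<Rightarrow> (nat \<times> 'a) set set" where
  "copy_edges E = {{(i, u), (i, v)} | i u v. i < 6 \<and> {u, v} \<in> E}"

definition blocked_V1 :: "'a set \<Rightarrow> 'a bvert set" where
  "blocked_V1 V = {Cp i v | i v. i < 6 \<and> v \<in> V}"

definition blocked_V2 :: "'a set set \<Rightarrow> 'a bvert set" where
  "blocked_V2 E = ER ` copy_edges E"

definition blocked_V3 :: "'a set \<Rightarrow> 'a bvert set" where
  "blocked_V3 V = {Fv i v | i v. i < 6 \<and> v \<in> V}"

definition blocked_V4 :: "nat \<Rightarrow> 'a bvert set" where
  "blocked_V4 d = {Vs, Vb} \<union> Xi ` {..<d}"

definition blocked_V :: "nat \<Rightarrow> 'a set \<Rightarrow> 'a set set \<Rightarrow> 'a bvert set" where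
  "blocked_V d V E = blocked_V1 V \<union> blocked_V2 E \<union> blocked_V3 V \<union> blocked_V4 d"

definition blocked_E :: "nat \<Rightarrow> 'a set \<Rightarrow> 'a set set \<Rightarrow> 'a bvert set set" where
  "blocked_E d V E =
     {{Cp i v, ER e} | i v e. i < 6 \<and> v \<in> V \<and> e \<in> copy_edges E \<and> (i, v) \<in> e}
   \<union> {{x, y} | x y. x \<in> blocked_V2 E \<union> blocked_V3 V \<and> y \<in> blocked_V2 E \<union> blocked_V3 V \<and> x \<noteq> y}
   \<union> {{Cp i v, Fv i v} | i v. i < 6 \<and> v \<in> V}
   \<union> {{x, Vs} | x. x \<in> blocked_V2 E \<union> blocked_V3 V}
   \<union> {{x, Vb} | x. x \<in> blocked_V2 E \<union> blocked_V3 V}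
   \<union> {{Vs, Xi j} | j. j < d}
   \<union> {{Xi j, Vb} | j. j < d}"

end

theory Submission
  imports Defs
begin

text \<open>All subtrees of the clique V2 \<union> V3 share a node z (Helly property), and the degree
  conditions leave the tree with at most one node b of degree greater than two. A node lies in
  the subtrees of at most two vertices of V1: three such subtrees through a common node are
  nested, and then the middle one separates the twins f(v) of the outer two, which must overlap.
  Hence some copy of G has all its subtrees avoiding z and b, so that, rooted at z, each of them
  lies on the path from z to a single leaf. Colouring the vertices of this copy by these leaves
  is proper: the subtrees of adjacent vertices both overlap that of their edge-representative,
  which contains z, so they meet, hence are nested, and then the larger one overlaps the twin of
  the smaller one.\<close>

lemma simple_graph_edgeD:
  assumes "simple_graph N F" "{u, x} \<in> F"
  shows "u \<in> N" "x \<in> N" "u \<noteq> x"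
  using assms unfolding simple_graph_def by (auto simp: doubleton_eq_iff)

lemma subtree_nodes: "subtree N F X \<Longrightarrow> X \<subseteq> N"
  unfolding subtree_def by auto

lemma subtree_nonempty: "subtree N F X \<Longrightarrow> X \<noteq> {}"
  unfolding subtree_def connected_graph_def by auto

lemma rtrancl_closed:
  assumes "(u, w) \<in> R\<^sup>*" "u \<in> D" "\<And>p q. (p, q) \<in> R \<Longrightarrow> p \<in> D \<Longrightarrow> q \<in> D"
  shows "w \<in> D"
  using assms by (induction rule: rtrancl_induct) auto

lemma has_cycleI:
  assumes "distinct cs" "length cs \<ge> 3" "set cs \<subseteq> N"
    and "successively (\<lambda>x y. {x, y} \<in> F) cs" "{last cs, hd cs} \<in> F"
  shows "has_cycle N F"
  unfolding has_cycle_def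
proof (intro exI conjI allI impI)
  fix i assume i: "i < length cs"
  show "{cs ! i, cs ! ((i + 1) mod length cs)} \<in> F"
  proof (cases "Suc i < length cs")
    case True
    then show ?thesis using successively_nth[OF assms(4) True] by simp
  next
    case False
    then have "i = length cs - 1" "Suc i = length cs" using i by auto
    moreover have "cs \<noteq> []" using assms(2) by auto
    ultimately show ?thesis using assms(5) by (simp add: last_conv_nth hd_conv_nth)
  qed
qed (use assms in auto)

section \<open>Rooted trees\<close>

locale rooted_tree =
  fixes N :: "'n set" and F :: "'n set set" and r :: 'n
  assumes tree: "is_tree N F" and root_in: "r \<in> N"
begin

lemma simple: "simple_graph N F"
  and connected: "connected_graph N F"
  and acyclic: "\<not> has_cycle N F"
  using tree unfolding is_tree_def by auto

lemma finite_nodes: "finite N"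
  using simple unfolding simple_graph_def by auto

lemma edge_nodes: "{u, x} \<in> F \<Longrightarrow> u \<in> N" "{u, x} \<in> F \<Longrightarrow> x \<in> N" "{u, x} \<in> F \<Longrightarrow> u \<noteq> x"
  using simple_graph_edgeD[OF simple] by blast+

lemma adj_rel_iff: "(x, y) \<in> adj_rel N F \<longleftrightarrow> {x, y} \<in> F"
  unfolding adj_rel_def using edge_nodes by auto

definition depth :: "'n \<Rightarrow> nat" where
  "depth x = (LEAST n. (r, x) \<in> adj_rel N F ^^ n)"

lemma reach_in_depth: "x \<in> N \<Longrightarrow> (r, x) \<in> adj_rel N F ^^ depth x"
proof -
  assume "x \<in> N"
  then have "(r, x) \<in> (adj_rel N F)\<^sup>*" using connected root_in unfolding connected_graph_def by auto
  then obtain n where "(r, x) \<in> adj_rel N F ^^ n" using rtrancl_power by blast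
  then show ?thesis unfolding depth_def by (rule LeastI)
qed

lemma depth_le: "(r, x) \<in> adj_rel N F ^^ n \<Longrightarrow> depth x \<le> n"
  unfolding depth_def by (rule Least_le)

lemma depth_eq_0_iff: "x \<in> N \<Longrightarrow> depth x = 0 \<longleftrightarrow> x = r"
  using reach_in_depth[of x] depth_le[of r 0] by fastforce

lemma exists_parent:
  assumes "x \<in> N" "x \<noteq> r"
  shows "\<exists>y. {y, x} \<in> F \<and> Suc (depth y) = depth x"
proof -
  obtain k where k: "depth x = Suc k" using assms depth_eq_0_iff by (cases "depth x") auto
  then obtain y where y: "(r, y) \<in> adj_rel N F ^^ k" "(y, x) \<in> adj_rel N F"
    using reach_in_depth[OF assms(1)] by auto
  have "depth x \<le> Suc (depth y)"
    using y(2) reach_in_depth[of y] by (intro depth_le) (auto simp: adj_rel_def)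
  then have "Suc (depth y) = depth x" using depth_le[OF y(1)] k by auto
  then show ?thesis using y(2) adj_rel_iff by blast
qed

definition parent :: "'n \<Rightarrow> 'n" where
  "parent x = (SOME y. {y, x} \<in> F \<and> Suc (depth y) = depth x)"

lemma
  assumes "x \<in> N" "x \<noteq> r"
  shows parent_edge: "{x, parent x} \<in> F"
    and depth_parent: "Suc (depth (parent x)) = depth x"
    and parent_in: "parent x \<in> N"
proof -
  have "{parent x, x} \<in> F \<and> Suc (depth (parent x)) = depth x"
    unfolding parent_def using someI_ex[OF exists_parent[OF assms]] .
  then show "{x, parent x} \<in> F" "Suc (depth (parent x)) = depth x"
    by (auto simp: insert_commute)
  then show "parent x \<in> N" using edge_nodes by blast
qed

lemma parent_iter:
  assumes "x \<in> N" "i \<le> depth x"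
  shows "(parent ^^ i) x \<in> N \<and> depth ((parent ^^ i) x) = depth x - i"
  using assms(2)
proof (induction i)
  case (Suc i)
  then have "(parent ^^ i) x \<noteq> r" using depth_eq_0_iff by fastforce
  then show ?case using Suc parent_in depth_parent by fastforce
qed (use assms in simp)

lemma parent_iter_ne_root: "x \<in> N \<Longrightarrow> i < depth x \<Longrightarrow> (parent ^^ i) x \<noteq> r"
  using parent_iter[of x i] depth_eq_0_iff by fastforce

lemma parent_iter_edge:
  "x \<in> N \<Longrightarrow> i < depth x \<Longrightarrow> {(parent ^^ i) x, (parent ^^ Suc i) x} \<in> F"
  using parent_iter[of x i] parent_iter_ne_root parent_edge by simp

lemma parent_iter_inj:
  "x \<in> N \<Longrightarrow> i \<le> depth x \<Longrightarrow> j \<le> depth x \<Longrightarrow> (parent ^^ i) x = (parent ^^ j) x \<Longrightarrow> i = j"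
  using parent_iter[of x i] parent_iter[of x j] by auto

definition ancestor :: "'n \<Rightarrow> 'n \<Rightarrow> bool" where
  "ancestor a b \<longleftrightarrow> (\<exists>i\<le>depth b. (parent ^^ i) b = a)"

lemma root_ancestor: "x \<in> N \<Longrightarrow> ancestor r x"
  unfolding ancestor_def using parent_iter[of x "depth x"] depth_eq_0_iff by fastforce

text \<open>The walk from a up to the first of its ancestors that is also an ancestor of b,
  then down to b, is a cycle unless a and b are parent and child.\<close>
lemma edge_parent:
  assumes e: "{a, b} \<in> F"
  shows "(a \<noteq> r \<and> b = parent a) \<or> (b \<noteq> r \<and> a = parent b)"
proof (rule ccontr)
  assume not_parent: "\<not> ?thesis"
  have aN: "a \<in> N" and bN: "b \<in> N" and ab: "a \<noteq> b" using e edge_nodes by auto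
  define up where "up x k = map (\<lambda>n. (parent ^^ n) x) [0..<k]" for x k
  have up_walk: "successively (\<lambda>x y. {x, y} \<in> F) (up x k)" if "x \<in> N" "k \<le> Suc (depth x)" for x k
    using that parent_iter_edge unfolding up_def successively_map successively_conv_nth by auto
  have up_distinct: "distinct (up x k)" if "x \<in> N" "k \<le> Suc (depth x)" for x k
    using that parent_iter_inj unfolding up_def distinct_map inj_on_def by auto
  define P where "P i \<longleftrightarrow> ancestor ((parent ^^ i) a) b" for i
  have "P (depth a)"
    unfolding P_def using root_ancestor bN parent_iter[OF aN, of "depth a"] depth_eq_0_iff by fastforce
  define i where "i = (LEAST i. P i)"
  have ia: "i \<le> depth a" using Least_le[of P, OF \<open>P (depth a)\<close>] unfolding i_def .
  have "P i" using LeastI[of P, OF \<open>P (depth a)\<close>] unfolding i_def .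
  then obtain j where j: "j \<le> depth b" "(parent ^^ j) b = (parent ^^ i) a"
    unfolding P_def ancestor_def by auto
  define cs where "cs = up a (Suc i) @ rev (up b j)"
  have ij: "i + j \<ge> 2"
  proof (rule ccontr)
    assume "\<not> i + j \<ge> 2"
    then consider "i = 0" "j = 0" | "i = 0" "j = 1" | "i = 1" "j = 0" by linarith
    then show False
    proof cases
      case 1
      then show False using j ab by simp
    next
      case 2
      then have "b \<noteq> r" using j(1) depth_eq_0_iff[OF bN] by auto
      then show False using 2 j not_parent by simp
    next
      case 3
      then have "a \<noteq> r" using ia depth_eq_0_iff[OF aN] by auto
      then show False using 3 j not_parent by simp
    qed
  qed
  have disjoint: "set (up a (Suc i)) \<inter> set (up b j) = {}"
  proof -
    have "(parent ^^ n) a \<noteq> (parent ^^ k) b" if "n \<le> i" "k < j" for n k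
    proof
      assume eq: "(parent ^^ n) a = (parent ^^ k) b"
      then have "P n" unfolding P_def ancestor_def using that j(1) by (auto intro!: exI[of _ k])
      then have "n = i" using not_less_Least[of n P] that(1) unfolding i_def by fastforce
      then show False using parent_iter_inj[OF bN, of j k] eq j that by auto
    qed
    then show ?thesis unfolding up_def by auto
  qed
  have junction: "j > 0 \<Longrightarrow> {(parent ^^ i) a, (parent ^^ (j - 1)) b} \<in> F"
    using parent_iter_edge[OF bN, of "j - 1"] j by (simp add: insert_commute)
  have "has_cycle N F"
  proof (rule has_cycleI[of cs])
    show "distinct cs" using up_distinct aN bN ia j(1) disjoint unfolding cs_def by auto
    show "length cs \<ge> 3" using ij unfolding cs_def up_def by simp
    show "set cs \<subseteq> N" using parent_iter aN bN ia j(1) unfolding cs_def up_def by auto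
    have "up b j \<noteq> [] \<Longrightarrow> {last (up a (Suc i)), hd (rev (up b j))} \<in> F"
      using junction by (simp add: up_def hd_rev last_map)
    then show "successively (\<lambda>x y. {x, y} \<in> F) cs"
      using up_walk[OF aN, of "Suc i"] up_walk[OF bN, of j] ia j(1)
      unfolding cs_def by (auto simp: successively_append_iff insert_commute)
    have "hd cs = a" unfolding cs_def up_def by (simp del: upt_Suc add: upt_conv_Cons)
    moreover have "last cs = b"
      using j(2) by (cases j) (simp_all add: cs_def up_def last_rev upt_conv_Cons)
    ultimately show "{last cs, hd cs} \<in> F" using e by (simp add: insert_commute)
  qed
  then show False using acyclic by simp
qed

lemma ancestor_refl: "ancestor a a"
  unfolding ancestor_def by (intro exI[of _ 0]) auto

lemma ancestorD: "b \<in> N \<Longrightarrow> ancestor a b \<Longrightarrow> a \<in> N \<and> depth a \<le> depth b"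
  unfolding ancestor_def using parent_iter by auto

lemma ancestor_depth_eq:
  assumes "b \<in> N" "ancestor a b" "depth a = depth b"
  shows "a = b"
proof -
  obtain i where i: "i \<le> depth b" "(parent ^^ i) b = a" using assms(2) unfolding ancestor_def by auto
  then have "i = 0" using parent_iter[OF assms(1) i(1)] assms(3) by auto
  then show ?thesis using i by simp
qed

lemma ancestor_parentI:
  assumes "b \<in> N" "b \<noteq> r" "ancestor a (parent b)"
  shows "ancestor a b"
proof -
  obtain i where i: "i \<le> depth (parent b)" "(parent ^^ i) (parent b) = a"
    using assms(3) unfolding ancestor_def by auto
  then have "(parent ^^ Suc i) b = a" by (simp add: funpow_Suc_right del: funpow.simps)
  moreover have "Suc i \<le> depth b" using i(1) depth_parent[OF assms(1,2)] by auto
  ultimately show ?thesis unfolding ancestor_def by blast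
qed

lemma ancestor_parent: "b \<in> N \<Longrightarrow> b \<noteq> r \<Longrightarrow> ancestor (parent b) b"
  using ancestor_parentI ancestor_refl by blast

lemma ancestor_parentD:
  assumes "b \<in> N" "ancestor a b" "a \<noteq> b"
  shows "b \<noteq> r \<and> ancestor a (parent b)"
proof -
  obtain i where i: "i \<le> depth b" "(parent ^^ i) b = a" using assms(2) unfolding ancestor_def by auto
  then obtain k where k: "i = Suc k" using assms(3) by (cases i) auto
  have b: "b \<noteq> r" using i k depth_eq_0_iff[OF assms(1)] by auto
  have "(parent ^^ k) (parent b) = a" using i(2) k by (simp add: funpow_Suc_right del: funpow.simps)
  moreover have "k \<le> depth (parent b)" using i(1) k depth_parent[OF assms(1) b] by auto
  ultimately show ?thesis using b unfolding ancestor_def by blast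
qed

lemma ancestor_trans:
  assumes "c \<in> N" "ancestor a b" "ancestor b c"
  shows "ancestor a c"
proof -
  obtain j where j: "j \<le> depth c" "(parent ^^ j) c = b" using assms unfolding ancestor_def by auto
  obtain i where i: "i \<le> depth b" "(parent ^^ i) b = a" using assms unfolding ancestor_def by auto
  have "depth b = depth c - j" using parent_iter[OF assms(1) j(1)] j(2) by simp
  then have "i + j \<le> depth c" "(parent ^^ (i + j)) c = a" using i j by (auto simp: funpow_add)
  then show ?thesis unfolding ancestor_def by blast
qed

lemma ancestors_linear:
  assumes "l \<in> N" "ancestor a l" "ancestor b l"
  shows "ancestor a b \<or> ancestor b a"
proof -
  obtain i where i: "i \<le> depth l" "(parent ^^ i) l = a" using assms unfolding ancestor_def by auto
  obtain j where j: "j \<le> depth l" "(parent ^^ j) l = b" using assms unfolding ancestor_def by auto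
  have "ancestor ((parent ^^ n) l) ((parent ^^ m) l)" if "m \<le> n" "n \<le> depth l" for m n
  proof -
    have "(parent ^^ (n - m)) ((parent ^^ m) l) = (parent ^^ n) l"
      using that by (metis funpow_add le_add_diff_inverse2 o_apply)
    moreover have "n - m \<le> depth ((parent ^^ m) l)" using parent_iter[OF assms(1)] that by auto
    ultimately show ?thesis unfolding ancestor_def by blast
  qed
  then show ?thesis using i j by (cases "i \<le> j") auto
qed

definition is_top :: "'n set \<Rightarrow> 'n \<Rightarrow> bool" where
  "is_top X t \<longleftrightarrow> t \<in> X \<and> (\<forall>y\<in>X. depth t \<le> depth y)"

lemma is_top_exists: "X \<noteq> {} \<Longrightarrow> \<exists>t. is_top X t"
  unfolding is_top_def using ex_has_least_nat[of "\<lambda>x. x \<in> X" _ depth] by blast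

text \<open>If the parent of y left X, the descendants of y in X would be closed under
  X-adjacency, so the top of X would be a descendant of y.\<close>
lemma subtree_parent_closed:
  assumes X: "subtree N F X" and t: "is_top X t" and y: "y \<in> X" "y \<noteq> t"
  shows "y \<noteq> r \<and> parent y \<in> X"
proof -
  have XN: "X \<subseteq> N" using X subtree_nodes by auto
  have yr: "y \<noteq> r"
  proof
    assume "y = r"
    then have "depth t = 0" using t y depth_eq_0_iff[OF root_in] unfolding is_top_def by force
    then show False using t XN y \<open>y = r\<close> depth_eq_0_iff unfolding is_top_def by auto
  qed
  show ?thesis
  proof (rule ccontr)
    assume "\<not> ?thesis"
    then have py: "parent y \<notin> X" using yr by auto
    define D where "D = {w \<in> X. ancestor y w}"
    have "(y, t) \<in> (adj_rel X {e \<in> F. e \<subseteq> X})\<^sup>*"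
      using X y t unfolding subtree_def connected_graph_def is_top_def by auto
    then have "t \<in> D"
    proof (rule rtrancl_closed)
      show "y \<in> D" unfolding D_def using y ancestor_refl by auto
    next
      fix p q assume "(p, q) \<in> adj_rel X {e \<in> F. e \<subseteq> X}" "p \<in> D"
      then have e: "{p, q} \<in> F" "p \<in> X" "q \<in> X" and yp: "ancestor y p"
        unfolding adj_rel_def D_def by auto
      have pN: "p \<in> N" "q \<in> N" using e XN by auto
      from edge_parent[OF e(1)] show "q \<in> D"
      proof
        assume h: "p \<noteq> r \<and> q = parent p"
        then have "p \<noteq> y" using py e by auto
        then show ?thesis using ancestor_parentD[OF pN(1) yp] h e unfolding D_def by auto
      next
        assume "q \<noteq> r \<and> p = parent q"
        then show ?thesis using ancestor_parentI[OF pN(2)] yp e unfolding D_def by auto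
      qed
    qed
    then have "ancestor y t" unfolding D_def by auto
    moreover have "depth t \<le> depth y" "t \<in> N" using t y XN unfolding is_top_def by auto
    ultimately have "y = t" using ancestorD ancestor_depth_eq by fastforce
    then show False using y by simp
  qed
qed

lemma is_top_ancestor:
  assumes X: "subtree N F X" and t: "is_top X t"
  shows "y \<in> X \<Longrightarrow> ancestor t y"
proof (induction "depth y" arbitrary: y rule: less_induct)
  case less
  show ?case
  proof (cases "y = t")
    case False
    then have y: "y \<noteq> r" "parent y \<in> X" using subtree_parent_closed[OF X t less.prems] by auto
    have "y \<in> N" using less.prems X subtree_nodes by auto
    then show ?thesis
      using less.hyps[of "parent y"] y depth_parent ancestor_parentI by fastforce
  qed (simp add: ancestor_refl)
qed

lemma subtree_ancestor_closed:
  assumes X: "subtree N F X" and t: "is_top X t" and y: "y \<in> X"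
    and w: "ancestor w y" and tw: "depth t \<le> depth w"
  shows "w \<in> X"
  using y w
proof (induction "depth y" arbitrary: y rule: less_induct)
  case less
  show ?case
  proof (cases "w = y")
    case False
    have yN: "y \<in> N" using less.prems X subtree_nodes by auto
    have "depth w < depth y"
      using False ancestorD[OF yN less.prems(2)] ancestor_depth_eq[OF yN less.prems(2)]
      by fastforce
    then have "depth t < depth y" using tw by simp
    then have "y \<noteq> t" by auto
    then have "y \<noteq> r" "parent y \<in> X" using subtree_parent_closed[OF X t less.prems(1)] by auto
    then show ?thesis
      using less.hyps[of "parent y"] depth_parent[OF yN] ancestor_parentD[OF yN less.prems(2) False]
      by fastforce
  qed (use less.prems in simp)
qed

lemma subtree_convex:
  assumes X: "subtree N F X" and a: "a \<in> X" and b: "b \<in> X" and "ancestor a w" "ancestor w b"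
  shows "w \<in> X"
proof -
  obtain t where t: "is_top X t" using is_top_exists subtree_nonempty[OF X] by blast
  have "b \<in> N" using b X subtree_nodes by auto
  then have "w \<in> N" "depth a \<le> depth w" using ancestorD assms(4,5) by blast+
  moreover have "depth t \<le> depth a" using t a unfolding is_top_def by auto
  ultimately show ?thesis using subtree_ancestor_closed[OF X t b assms(5)] by auto
qed

lemma subtree_root_ancestor_closed:
  assumes X: "subtree N F X" and "r \<in> X" "y \<in> X" "ancestor w y"
  shows "w \<in> X"
proof -
  have "is_top X r" unfolding is_top_def using assms depth_eq_0_iff[OF root_in] by auto
  then show ?thesis using subtree_ancestor_closed[OF X _ assms(3,4)] depth_eq_0_iff[OF root_in] by auto
qed

text \<open>Helly property: the deepest of the tops lies in every member.\<close>
lemma subtrees_helly: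
  assumes S: "\<forall>x\<in>I. subtree N F (S x)" and I: "I \<noteq> {}"
    and meet: "\<forall>x\<in>I. \<forall>y\<in>I. S x \<inter> S y \<noteq> {}"
  shows "\<exists>z\<in>N. \<forall>x\<in>I. z \<in> S x"
proof -
  define top where "top x = (SOME t. is_top (S x) t)" for x
  have top: "is_top (S x) (top x)" if "x \<in> I" for x
    unfolding top_def using is_top_exists subtree_nonempty S that by (metis someI_ex)
  have "top ` I \<subseteq> N" using top S subtree_nodes unfolding is_top_def by blast
  then have fin: "finite (depth ` top ` I)" using finite_nodes finite_subset by blast
  have "Max (depth ` top ` I) \<in> depth ` top ` I" using Max_in[OF fin] I by blast
  then obtain x0 where x0: "x0 \<in> I" "\<forall>x\<in>I. depth (top x) \<le> depth (top x0)"
    using Max_ge[OF fin] by fastforce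
  have "\<forall>x\<in>I. top x0 \<in> S x"
  proof
    fix x assume x: "x \<in> I"
    obtain y where y: "y \<in> S x" "y \<in> S x0" using meet x x0 by blast
    have "ancestor (top x0) y" using is_top_ancestor S x0(1) top y(2) by blast
    then show "top x0 \<in> S x"
      using subtree_ancestor_closed[OF _ top[OF x] y(1)] S x x0(2) by blast
  qed
  moreover have "top x0 \<in> N" using top[OF x0(1)] S x0(1) subtree_nodes unfolding is_top_def by blast
  ultimately show ?thesis by blast
qed

lemma finite_neighbours: "finite {u. {u, x} \<in> F}"
  by (rule finite_subset[OF _ finite_nodes]) (auto dest: edge_nodes(1))

lemma degree_ge_3:
  assumes "{a, b, c} \<subseteq> {u. {u, x} \<in> F}" "a \<noteq> b" "b \<noteq> c" "a \<noteq> c"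
  shows "3 \<le> degree F x"
  using card_mono[OF finite_neighbours assms(1)] assms(2-4) unfolding degree_def by simp

lemma unique_child:
  assumes "w \<noteq> r" "degree F w \<le> 2" and c: "c1 \<in> N" "c2 \<in> N" "c1 \<noteq> r" "c2 \<noteq> r"
    and "parent c1 = w" "parent c2 = w"
  shows "c1 = c2"
proof (rule ccontr)
  assume "c1 \<noteq> c2"
  have wN: "w \<in> N" using parent_in c assms(7) by blast
  have "{c1, w} \<in> F" "{c2, w} \<in> F" "{parent w, w} \<in> F"
    using parent_edge[OF c(1,3)] parent_edge[OF c(2,4)] parent_edge[OF wN assms(1)] assms(7,8)
    by (auto simp: insert_commute)
  then have nbrs: "{c1, c2, parent w} \<subseteq> {u. {u, w} \<in> F}" by auto
  have "depth (parent w) < depth c1" "depth (parent w) < depth c2"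
    using depth_parent[OF c(1,3)] depth_parent[OF c(2,4)] depth_parent[OF wN assms(1)] assms(7,8)
    by auto
  then have "c2 \<noteq> parent w" "c1 \<noteq> parent w" by auto
  then have "3 \<le> degree F w" using degree_ge_3[OF nbrs \<open>c1 \<noteq> c2\<close>] by blast
  then show False using assms(2) by simp
qed

lemma leaf_below:
  assumes b: "b \<in> N" "b \<noteq> r"
  shows "\<exists>l\<in>leaves N F. ancestor b l"
proof -
  define D where "D = {w \<in> N. ancestor b w}"
  have fin: "finite (depth ` D)" using finite_nodes unfolding D_def by simp
  have "b \<in> D" using b ancestor_refl unfolding D_def by auto
  then have "Max (depth ` D) \<in> depth ` D" using Max_in[OF fin] by blast
  then obtain l where l: "l \<in> N" "ancestor b l" and deepest: "\<forall>y\<in>D. depth y \<le> depth l"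
    using Max_ge[OF fin] unfolding D_def by fastforce
  have "depth b \<le> depth l" "depth b \<noteq> 0" using ancestorD[OF l] b depth_eq_0_iff by auto
  then have "l \<noteq> r" using depth_eq_0_iff[OF l(1)] by auto
  have "{u. {u, l} \<in> F} = {parent l}"
  proof (intro equalityI subsetI)
    fix u assume "u \<in> {u. {u, l} \<in> F}"
    then have e: "{u, l} \<in> F" by simp
    have "\<not> (u \<noteq> r \<and> l = parent u)"
    proof
      assume h: "u \<noteq> r \<and> l = parent u"
      have uN: "u \<in> N" using e edge_nodes by blast
      then have "u \<in> D" using ancestor_trans[OF uN l(2)] ancestor_parent h unfolding D_def by auto
      then show False using deepest depth_parent[OF uN] h by fastforce
    qed
    then show "u \<in> {parent l}" using edge_parent[OF e] by auto
  qed (use parent_edge[OF l(1) \<open>l \<noteq> r\<close>] in \<open>auto simp: insert_commute\<close>)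
  then show ?thesis using l unfolding leaves_def degree_def by auto
qed

text \<open>By induction on the level: two nodes of X on one level have a common parent in X,
  which would then have three neighbours.\<close>
lemma subtree_level_unique:
  assumes X: "subtree N F X" and rX: "r \<notin> X" and deg: "\<forall>w\<in>X. degree F w \<le> 2"
  shows "x \<in> X \<Longrightarrow> y \<in> X \<Longrightarrow> depth x = depth y \<Longrightarrow> x = y"
proof (induction "depth x" arbitrary: x y rule: less_induct)
  case less
  obtain t where t: "is_top X t" using is_top_exists subtree_nonempty[OF X] by blast
  have N: "x \<in> N" "y \<in> N" using less.prems X subtree_nodes by auto
  have top_eq: "z = t" if "z \<in> X" "depth z = depth t" for z
    using ancestor_depth_eq[OF _ is_top_ancestor[OF X t that(1)]] that subtree_nodes[OF X] by auto
  show ?case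
  proof (cases "depth x = depth t")
    case True
    then have "x = t" "y = t" using top_eq less.prems by (metis, metis)
    then show ?thesis by simp
  next
    case False
    then have "x \<noteq> t" "y \<noteq> t" using less.prems(3) by auto
    then have p: "x \<noteq> r" "parent x \<in> X" "y \<noteq> r" "parent y \<in> X"
      using subtree_parent_closed[OF X t less.prems(1)] subtree_parent_closed[OF X t less.prems(2)]
      by auto
    have "depth (parent x) < depth x" "depth (parent x) = depth (parent y)"
      using depth_parent[OF N(1) p(1)] depth_parent[OF N(2) p(3)] less.prems(3) by auto
    then have "parent y = parent x" using less.hyps[OF _ p(2,4)] by simp
    moreover have "parent x \<noteq> r" using p rX by auto
    ultimately show ?thesis using unique_child[OF _ deg[rule_format, OF p(2)] N p(1,3) refl] by blast
  qed
qed

lemma subtree_below_leaf: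
  assumes X: "subtree N F X" and rX: "r \<notin> X" and deg: "\<forall>w\<in>X. degree F w \<le> 2"
  shows "\<exists>l\<in>leaves N F. \<forall>x\<in>X. ancestor x l"
proof -
  have XN: "X \<subseteq> N" using subtree_nodes[OF X] .
  have fin: "finite (depth ` X)" using XN finite_nodes finite_subset by blast
  have "Max (depth ` X) \<in> depth ` X" using Max_in[OF fin] subtree_nonempty[OF X] by blast
  then obtain b where b: "b \<in> X" and deepest: "\<forall>y\<in>X. depth y \<le> depth b"
    using Max_ge[OF fin] by fastforce
  obtain t where t: "is_top X t" using is_top_exists subtree_nonempty[OF X] by blast
  have bN: "b \<in> N" using b XN by auto
  have "ancestor x b" if x: "x \<in> X" for x
  proof -
    define y where "y = (parent ^^ (depth b - depth x)) b"
    have "ancestor y b" "depth y = depth x"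
      using parent_iter[OF bN, of "depth b - depth x"] deepest x unfolding y_def ancestor_def
      by (auto intro!: exI[of _ "depth b - depth x"])
    moreover have "depth t \<le> depth x" using t x unfolding is_top_def by auto
    ultimately have "y \<in> X" using subtree_ancestor_closed[OF X t b] by simp
    then have "y = x" using subtree_level_unique[OF X rX deg] x \<open>depth y = depth x\<close> by blast
    then show ?thesis using \<open>ancestor y b\<close> by simp
  qed
  moreover obtain l where "l \<in> leaves N F" "ancestor b l" using leaf_below bN b rX by blast
  moreover have "l \<in> N" using \<open>l \<in> leaves N F\<close> unfolding leaves_def by auto
  ultimately show ?thesis using ancestor_trans by blast
qed

lemma card_edges: "card F = card N - 1"
proof -
  have "bij_betw (\<lambda>x. {x, parent x}) (N - {r}) F"
  proof (rule bij_betw_imageI)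
    show "inj_on (\<lambda>x. {x, parent x}) (N - {r})"
    proof (rule inj_onI)
      fix x y assume x: "x \<in> N - {r}" and y: "y \<in> N - {r}" and eq: "{x, parent x} = {y, parent y}"
      show "x = y"
      proof (rule ccontr)
        assume "x \<noteq> y"
        then have "x = parent y" "y = parent x" using eq by (auto simp: doubleton_eq_iff)
        then show False using depth_parent[of x] depth_parent[of y] x y by auto
      qed
    qed
    have "e \<in> (\<lambda>x. {x, parent x}) ` (N - {r})" if e: "e \<in> F" for e
    proof -
      obtain a b where "e = {a, b}" using e simple unfolding simple_graph_def by blast
      then show ?thesis using edge_parent[of a b] e edge_nodes by (auto simp: insert_commute)
    qed
    then show "(\<lambda>x. {x, parent x}) ` (N - {r}) = F" using parent_edge by auto
  qed
  then have "card F = card (N - {r})" by (simp add: bij_betw_same_card)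
  then show ?thesis using root_in finite_nodes by simp
qed

lemma degree_sum: "(\<Sum>x\<in>N. degree F x) = 2 * card F"
proof -
  define ends where "ends e = {(x, u). {u, x} = e}" for e :: "'n set"
  have "F \<subseteq> Pow N" using simple unfolding simple_graph_def by auto
  then have finite_edges: "finite F" using finite_nodes finite_subset by blast
  have ends_card: "card (ends e) = 2" if "e \<in> F" for e
  proof -
    obtain a b where "e = {a, b}" "a \<noteq> b" using \<open>e \<in> F\<close> simple unfolding simple_graph_def by blast
    then have "ends e = {(a, b), (b, a)}" unfolding ends_def by (auto simp: doubleton_eq_iff)
    then show ?thesis using \<open>a \<noteq> b\<close> by simp
  qed
  have "(\<Sum>x\<in>N. degree F x) = card (SIGMA x:N. {u. {u, x} \<in> F})"
    unfolding degree_def using finite_nodes finite_neighbours by (simp add: card_SigmaI)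
  also have "(SIGMA x:N. {u. {u, x} \<in> F}) = (\<Union>e\<in>F. ends e)"
    unfolding ends_def by (auto dest: edge_nodes(2))
  also have "card \<dots> = (\<Sum>e\<in>F. card (ends e))"
  proof (rule card_UN_disjoint[OF finite_edges])
    show "\<forall>e\<in>F. finite (ends e)" using ends_card card.infinite by fastforce
    show "\<forall>e\<in>F. \<forall>e'\<in>F. e \<noteq> e' \<longrightarrow> ends e \<inter> ends e' = {}" unfolding ends_def by blast
  qed
  also have "\<dots> = 2 * card F" using ends_card by simp
  finally show ?thesis .
qed

lemma degree_ge_1:
  assumes "x \<in> N" "y \<in> N" "x \<noteq> y"
  shows "1 \<le> degree F x"
proof -
  have "(x, y) \<in> (adj_rel N F)\<^sup>*" using connected assms unfolding connected_graph_def by auto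
  then obtain p where "(x, p) \<in> adj_rel N F" using assms(3) by (metis converse_rtranclE)
  then have "{u. {u, x} \<in> F} \<noteq> {}" using adj_rel_iff by (auto simp: insert_commute)
  then show ?thesis using finite_neighbours unfolding degree_def by (simp add: Suc_le_eq card_gt_0_iff)
qed

text \<open>Along the path from the root to l, the subtree R containing the root is an initial
  segment, and X and Y are intervals both crossing its end.\<close>
lemma subtrees_on_root_path_meet:
  assumes X: "subtree N F X" and Y: "subtree N F Y" and R: "subtree N F R" and rR: "r \<in> R"
    and l: "l \<in> N" "\<forall>x\<in>X \<union> Y. ancestor x l"
    and XR: "overlap X R" and YR: "overlap Y R"
  shows "X \<inter> Y \<noteq> {}"
proof -
  have crossing: "\<exists>x x'. x \<in> Z \<and> x \<in> R \<and> x' \<in> Z \<and> x' \<notin> R \<and> ancestor x x'"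
    if Z: "overlap Z R" "Z \<subseteq> X \<union> Y" for Z
  proof -
    obtain x x' where x: "x \<in> Z" "x \<in> R" "x' \<in> Z" "x' \<notin> R"
      using Z(1) unfolding overlap_def by blast
    then have "ancestor x x' \<or> ancestor x' x" using ancestors_linear l Z(2) by blast
    then show ?thesis using x subtree_root_ancestor_closed[OF R rR x(2)] by blast
  qed
  obtain x x' where x: "x \<in> X" "x \<in> R" "x' \<in> X" "x' \<notin> R" "ancestor x x'"
    using crossing[OF XR] by blast
  obtain y y' where y: "y \<in> Y" "y \<in> R" "y' \<in> Y" "y' \<notin> R" "ancestor y y'"
    using crossing[OF YR] by blast
  have below: "ancestor u v" if "u \<in> R" "v \<in> X \<union> Y" "v \<notin> R" "u \<in> X \<union> Y" for u v
    using ancestors_linear[OF l(1)] l(2) that subtree_root_ancestor_closed[OF R rR that(1)] by blast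
  from ancestors_linear[OF l(1)] l(2) x(1) y(1) have "ancestor x y \<or> ancestor y x" by blast
  then show ?thesis
  proof
    assume "ancestor x y"
    then have "y \<in> X" using subtree_convex[OF X x(1,3)] below[OF y(2) _ x(4)] x y by blast
    then show ?thesis using y(1) by blast
  next
    assume "ancestor y x"
    then have "x \<in> Y" using subtree_convex[OF Y y(1,3)] below[OF x(2) _ y(4)] x y by blast
    then show ?thesis using x(1) by blast
  qed
qed

end

lemma tree_degree_sum:
  assumes "is_tree N F"
  shows "(\<Sum>x\<in>N. degree F x) = 2 * (card N - 1)"
proof -
  obtain r where "r \<in> N" using assms unfolding is_tree_def connected_graph_def by auto
  then interpret rooted_tree N F r using assms by unfold_locales
  show ?thesis using degree_sum card_edges by simp
qed

text \<open>Two branch nodes of degree at least d, together with the d leaves, would push the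
  degree sum above 2 (|N| - 1).\<close>
lemma tree_unique_branch_node:
  assumes T: "is_tree N F" and L: "card (leaves N F) = d" and d: "d \<ge> 3"
    and gap: "\<forall>v\<in>N. \<not> (2 < degree F v \<and> degree F v < d)"
    and b: "b1 \<in> N" "b2 \<in> N" "3 \<le> degree F b1" "3 \<le> degree F b2"
  shows "b1 = b2"
proof (rule ccontr)
  assume ne: "b1 \<noteq> b2"
  interpret rooted_tree N F b1 using T b by unfold_locales
  define Lv where "Lv = leaves N F"
  have LN: "Lv \<subseteq> N" unfolding Lv_def leaves_def by auto
  define g where "g x = (if x \<in> Lv then 1 else 2) + (if x = b1 then d - 2 else 0)
    + (if x = b2 then d - 2 else 0)" for x
  have "g x \<le> degree F x" if x: "x \<in> N" for x
  proof -
    have "d \<le> degree F b1" "d \<le> degree F b2" using gap b by force+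
    moreover have "b1 \<notin> Lv" "b2 \<notin> Lv" using b unfolding Lv_def leaves_def by auto
    moreover have "1 \<le> degree F x" using degree_ge_1[OF x] b ne by (cases "x = b1") auto
    ultimately show ?thesis unfolding g_def Lv_def leaves_def using ne x by auto
  qed
  then have "(\<Sum>x\<in>N. g x) \<le> 2 * (card N - 1)"
    using sum_mono[of N g "degree F"] tree_degree_sum[OF T] by simp
  moreover have "(\<Sum>x\<in>N. g x) = card Lv + 2 * (card N - card Lv) + 2 * (d - 2)"
  proof -
    have "(\<Sum>x\<in>N. (if x \<in> Lv then 1 else 2 :: nat))
        = (\<Sum>x\<in>N \<inter> {x. x \<in> Lv}. 1) + (\<Sum>x\<in>N \<inter> - {x. x \<in> Lv}. 2)"
      by (rule sum.If_cases[OF finite_nodes])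
    also have "N \<inter> {x. x \<in> Lv} = Lv" using LN by auto
    also have "N \<inter> - {x. x \<in> Lv} = N - Lv" by auto
    finally have "(\<Sum>x\<in>N. (if x \<in> Lv then 1 else 2 :: nat)) = card Lv + 2 * (card N - card Lv)"
      using LN finite_nodes by (simp add: card_Diff_subset finite_subset)
    then show ?thesis unfolding g_def using b finite_nodes ne by (simp add: sum.distrib)
  qed
  moreover have "card Lv \<le> card N" using LN finite_nodes card_mono by auto
  ultimately show False using L d unfolding Lv_def by linarith
qed

lemma tree_subtrees_helly:
  assumes T: "is_tree N F" and S: "\<forall>x\<in>I. subtree N F (S x)"
    and meet: "\<forall>x\<in>I. \<forall>y\<in>I. S x \<inter> S y \<noteq> {}"
  shows "\<exists>z\<in>N. \<forall>x\<in>I. z \<in> S x"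
proof -
  obtain r where r: "r \<in> N" using T unfolding is_tree_def connected_graph_def by auto
  interpret rooted_tree N F r using T r by unfold_locales
  show ?thesis using subtrees_helly[OF S _ meet] r by (cases "I = {}") auto
qed

section \<open>Colourings and nested sets\<close>

lemma colourableI_map:
  assumes "finite L" "card L = k" "\<forall>v\<in>V. f v \<in> L"
    and "\<forall>u\<in>V. \<forall>v\<in>V. {u, v} \<in> E \<longrightarrow> f u \<noteq> f v"
  shows "colourable k V E"
proof -
  obtain h where h: "bij_betw h L {0..<k}" using ex_bij_betw_finite_nat[OF assms(1)] assms(2) by blast
  have "\<forall>v\<in>V. h (f v) < k" using bij_betw_apply[OF h] assms(3) by fastforce
  moreover have "\<forall>u\<in>V. \<forall>v\<in>V. {u, v} \<in> E \<longrightarrow> h (f u) \<noteq> h (f v)"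
    using inj_onD[OF bij_betw_imp_inj_on[OF h]] assms(3,4) by metis
  ultimately show ?thesis unfolding colourable_def by (intro exI[of _ "\<lambda>v. h (f v)"]) blast
qed

lemma nested_partners_contra:
  assumes "Ca \<subseteq> Cb" "Cb \<subseteq> Cc" "overlap Ca Ga" "\<not> overlap Cb Ga" "overlap Cc Gc" "\<not> overlap Cb Gc"
    and "overlap Ga Gc"
  shows False
proof -
  have "Ga \<subseteq> Cb" using assms(1,3,4) unfolding overlap_def by blast
  then show False using assms unfolding overlap_def by blast
qed

text \<open>Sets through a common point that pairwise do not overlap form a chain; its middle
  member cannot separate the partners of the two outer ones.\<close>
lemma card_nested_with_private_partners:
  assumes P: "finite P" and w: "\<forall>p\<in>P. w \<in> C p" and own: "\<forall>p\<in>P. overlap (C p) (G p)"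
    and other: "\<forall>p\<in>P. \<forall>q\<in>P. p \<noteq> q \<longrightarrow>
      \<not> overlap (C p) (C q) \<and> \<not> overlap (C p) (G q) \<and> overlap (G p) (G q)"
  shows "card P \<le> 2"
proof (rule ccontr)
  assume "\<not> card P \<le> 2"
  then obtain T where "T \<subseteq> P" "card T = 3" using obtain_subset_with_card_n[of 3 P] by auto
  then obtain p1 p2 p3 where p: "p1 \<in> P" "p2 \<in> P" "p3 \<in> P" "p1 \<noteq> p2" "p2 \<noteq> p3" "p1 \<noteq> p3"
    unfolding card_3_iff by auto
  have no_chain: "\<not> (C a \<subseteq> C b \<and> C b \<subseteq> C c)"
    if abc: "a \<in> P" "b \<in> P" "c \<in> P" "a \<noteq> b" "b \<noteq> c" "a \<noteq> c" for a b c
  proof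
    assume "C a \<subseteq> C b \<and> C b \<subseteq> C c"
    moreover have "overlap (C a) (G a)" "overlap (C c) (G c)" using own abc by auto
    moreover have "\<not> overlap (C b) (G a)" "\<not> overlap (C b) (G c)" "overlap (G a) (G c)"
      using other abc by auto
    ultimately show False using nested_partners_contra by blast
  qed
  have nested: "C p \<subseteq> C q \<or> C q \<subseteq> C p" if "p \<in> P" "q \<in> P" "p \<noteq> q" for p q
    using w other that unfolding overlap_def by blast
  have "C p1 \<subseteq> C p2 \<or> C p2 \<subseteq> C p1" "C p1 \<subseteq> C p3 \<or> C p3 \<subseteq> C p1" "C p2 \<subseteq> C p3 \<or> C p3 \<subseteq> C p2"
    using nested p by auto
  moreover note no_chain[of p1 p2 p3] no_chain[of p1 p3 p2] no_chain[of p2 p1 p3]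
    no_chain[of p2 p3 p1] no_chain[of p3 p1 p2] no_chain[of p3 p2 p1]
  ultimately show False using p by argo
qed

section \<open>Subtree models of the blocked graph\<close>

lemma Cp_in_blocked_V: "i < 6 \<Longrightarrow> v \<in> V \<Longrightarrow> Cp i v \<in> blocked_V d V E"
  unfolding blocked_V_def blocked_V1_def by auto

lemma Fv_in_blocked_V3: "i < 6 \<Longrightarrow> v \<in> V \<Longrightarrow> Fv i v \<in> blocked_V3 V"
  unfolding blocked_V3_def by auto

lemma Fv_in_blocked_V: "i < 6 \<Longrightarrow> v \<in> V \<Longrightarrow> Fv i v \<in> blocked_V d V E"
  by (simp add: blocked_V_def Fv_in_blocked_V3)

lemma ER_in_blocked_V2: "e \<in> copy_edges E \<Longrightarrow> ER e \<in> blocked_V2 E"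
  unfolding blocked_V2_def by auto

lemma blocked_V2_V3_subset: "blocked_V2 E \<union> blocked_V3 V \<subseteq> blocked_V d V E"
  unfolding blocked_V_def by auto

lemma blocked_V2_V3_clique:
  "x \<in> blocked_V2 E \<union> blocked_V3 V \<Longrightarrow> y \<in> blocked_V2 E \<union> blocked_V3 V \<Longrightarrow> x \<noteq> y
    \<Longrightarrow> {x, y} \<in> blocked_E d V E"
  unfolding blocked_E_def by blast

lemma Cp_Fv_edge: "i < 6 \<Longrightarrow> v \<in> V \<Longrightarrow> {Cp i v, Fv i v} \<in> blocked_E d V E"
  unfolding blocked_E_def by blast

lemma Cp_ER_edge:
  "i < 6 \<Longrightarrow> v \<in> V \<Longrightarrow> e \<in> copy_edges E \<Longrightarrow> (i, v) \<in> e \<Longrightarrow> {Cp i v, ER e} \<in> blocked_E d V E"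
  unfolding blocked_E_def by blast

lemma Cp_Cp_not_edge: "{Cp i u, Cp j v} \<notin> blocked_E d V E"
  unfolding blocked_E_def blocked_V2_def blocked_V3_def by (auto simp: doubleton_eq_iff)

lemma Cp_Fv_edgeD: "{Cp i u, Fv j v} \<in> blocked_E d V E \<Longrightarrow> i = j \<and> u = v"
  unfolding blocked_E_def blocked_V2_def blocked_V3_def by (auto simp: doubleton_eq_iff)

locale blocked_subtree_model =
  fixes d :: nat and V :: "'a set" and E :: "'a set set"
    and N :: "'n set" and F :: "'n set set" and S :: "'a bvert \<Rightarrow> 'n set"
  assumes graph: "simple_graph V E" and tree: "is_tree N F"
    and subtree_S: "\<And>x. x \<in> blocked_V d V E \<Longrightarrow> subtree N F (S x)"
    and overlap_iff: "\<And>x y. x \<in> blocked_V d V E \<Longrightarrow> y \<in> blocked_V d V E \<Longrightarrow> x \<noteq> y \<Longrightarrow>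
      {x, y} \<in> blocked_E d V E \<longleftrightarrow> overlap (S x) (S y)"
begin

abbreviation copy_tree :: "nat \<times> 'a \<Rightarrow> 'n set" where
  "copy_tree p \<equiv> S (Cp (fst p) (snd p))"

abbreviation twin_tree :: "nat \<times> 'a \<Rightarrow> 'n set" where
  "twin_tree p \<equiv> S (Fv (fst p) (snd p))"

lemma clique_common_node: "\<exists>z\<in>N. \<forall>x\<in>blocked_V2 E \<union> blocked_V3 V. z \<in> S x"
proof (rule tree_subtrees_helly[OF tree])
  show "\<forall>x\<in>blocked_V2 E \<union> blocked_V3 V. subtree N F (S x)"
    using subtree_S blocked_V2_V3_subset[of E V d] by (meson subsetD)
  show "\<forall>x\<in>blocked_V2 E \<union> blocked_V3 V. \<forall>y\<in>blocked_V2 E \<union> blocked_V3 V. S x \<inter> S y \<noteq> {}"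
  proof (intro ballI)
    fix x y assume x: "x \<in> blocked_V2 E \<union> blocked_V3 V" and y: "y \<in> blocked_V2 E \<union> blocked_V3 V"
    have in_V: "x \<in> blocked_V d V E" "y \<in> blocked_V d V E"
      using x y blocked_V2_V3_subset[of E V d] by (meson subsetD)+
    show "S x \<inter> S y \<noteq> {}"
    proof (cases "x = y")
      case True
      then show ?thesis using subtree_nonempty[OF subtree_S[OF in_V(1)]] by simp
    next
      case False
      then have "overlap (S x) (S y)"
        using overlap_iff[OF in_V False] blocked_V2_V3_clique[OF x y False] by simp
      then show ?thesis unfolding overlap_def by simp
    qed
  qed
qed

lemma copy_overlaps_twin:
  assumes "i < 6" "v \<in> V"
  shows "overlap (S (Cp i v)) (S (Fv i v))"
  using overlap_iff[OF Cp_in_blocked_V[OF assms] Fv_in_blocked_V[OF assms]]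
    Cp_Fv_edge[OF assms, of d E] by simp

lemma copy_overlaps_other:
  assumes "i < 6" "u \<in> V" "j < 6" "v \<in> V" "(i, u) \<noteq> (j, v)"
  shows "\<not> overlap (S (Cp i u)) (S (Cp j v))" "\<not> overlap (S (Cp i u)) (S (Fv j v))"
    and "overlap (S (Fv i u)) (S (Fv j v))"
proof -
  have ne: "Cp i u \<noteq> Cp j v" "Fv i u \<noteq> Fv j v" using assms(5) by auto
  note Cp_i = Cp_in_blocked_V[OF assms(1,2)] and Cp_j = Cp_in_blocked_V[OF assms(3,4)]
    and Fv_i = Fv_in_blocked_V[OF assms(1,2)] and Fv_j = Fv_in_blocked_V[OF assms(3,4)]
  show "\<not> overlap (S (Cp i u)) (S (Cp j v))"
    using overlap_iff[OF Cp_i Cp_j ne(1)] Cp_Cp_not_edge[of i u j v d V E] by blast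
  have "{Cp i u, Fv j v} \<notin> blocked_E d V E" using Cp_Fv_edgeD[of i u j v d V E] assms(5) by auto
  then show "\<not> overlap (S (Cp i u)) (S (Fv j v))" using overlap_iff[OF Cp_i Fv_j] by simp
  have "{Fv i u, Fv j v} \<in> blocked_E d V E"
    using blocked_V2_V3_clique[OF UnI2 UnI2 ne(2)]
      Fv_in_blocked_V3[OF assms(1,2)] Fv_in_blocked_V3[OF assms(3,4)] by simp
  then show "overlap (S (Fv i u)) (S (Fv j v))" using overlap_iff[OF Fv_i Fv_j ne(2)] by simp
qed

lemma copies_through_node: "card {p \<in> {..<6} \<times> V. w \<in> copy_tree p} \<le> 2"
proof (rule card_nested_with_private_partners[where C = copy_tree and G = twin_tree and w = w])
  show "finite {p \<in> {..<6} \<times> V. w \<in> copy_tree p}"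
    using graph unfolding simple_graph_def by simp
  show "\<forall>p\<in>{p \<in> {..<6} \<times> V. w \<in> copy_tree p}. overlap (copy_tree p) (twin_tree p)"
    using copy_overlaps_twin by auto
  show "\<forall>p\<in>{p \<in> {..<6} \<times> V. w \<in> copy_tree p}. \<forall>q\<in>{p \<in> {..<6} \<times> V. w \<in> copy_tree p}.
      p \<noteq> q \<longrightarrow> \<not> overlap (copy_tree p) (copy_tree q) \<and> \<not> overlap (copy_tree p) (twin_tree q)
        \<and> overlap (twin_tree p) (twin_tree q)"
    using copy_overlaps_other by auto
qed simp

lemma copy_avoiding_nodes: "\<exists>i<6. \<forall>v\<in>V. z \<notin> S (Cp i v) \<and> b \<notin> S (Cp i v)"
proof -
  define P where "P w = {p \<in> {..<6} \<times> V. w \<in> copy_tree p}" for w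
  have fin: "finite (P w)" for w using graph unfolding simple_graph_def P_def by simp
  then have "card (fst ` (P z \<union> P b)) \<le> 4"
    using card_image_le[of "P z \<union> P b" fst] card_Un_le[of "P z" "P b"]
      copies_through_node[of z] copies_through_node[of b] unfolding P_def by simp
  then have "\<not> {..<6} \<subseteq> fst ` (P z \<union> P b)"
    using card_mono[of "fst ` (P z \<union> P b)" "{..<6::nat}"] fin by auto
  then obtain i where i: "i < 6" "i \<notin> fst ` (P z \<union> P b)" by auto
  then have "(i, v) \<notin> P z \<union> P b" for v by (metis fst_conv imageI)
  then show ?thesis using i(1) unfolding P_def by auto
qed

lemma adjacent_copies_diverge:
  assumes z: "z \<in> N" "\<forall>x\<in>blocked_V2 E \<union> blocked_V3 V. z \<in> S x"
    and i: "i < 6" and uv: "u \<in> V" "v \<in> V" "{u, v} \<in> E"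
    and avoid: "z \<notin> S (Cp i u)" "z \<notin> S (Cp i v)"
    and l: "l \<in> N" "\<forall>x\<in>S (Cp i u) \<union> S (Cp i v). rooted_tree.ancestor N F z x l"
  shows False
proof -
  interpret rooted_tree N F z using tree z(1) by unfold_locales
  define e where "e = {(i, u), (i, v)}"
  have e: "e \<in> copy_edges E" unfolding e_def copy_edges_def using i uv(3) by blast
  have ER_in: "ER e \<in> blocked_V d V E" using ER_in_blocked_V2[OF e] by (simp add: blocked_V_def)
  have u_ne_v: "u \<noteq> v" using graph uv(3) unfolding simple_graph_def by (auto simp: doubleton_eq_iff)
  have R: "subtree N F (S (ER e))" and zR: "z \<in> S (ER e)"
    using subtree_S[OF ER_in] z(2) ER_in_blocked_V2[OF e] by auto
  have crosses: "overlap (S (Cp i w)) (S (ER e))" if "w \<in> {u, v}" for w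
    using overlap_iff[OF Cp_in_blocked_V[OF i] ER_in] Cp_ER_edge[OF i _ e] that uv
    unfolding e_def by auto
  have "S (Cp i u) \<inter> S (Cp i v) \<noteq> {}"
    using subtrees_on_root_path_meet[OF subtree_S[OF Cp_in_blocked_V] subtree_S[OF Cp_in_blocked_V]
        R zR l] crosses i uv
    by simp
  moreover have "\<not> overlap (S (Cp i u)) (S (Cp i v))"
    using overlap_iff[OF Cp_in_blocked_V[OF i uv(1)] Cp_in_blocked_V[OF i uv(2)]]
      Cp_Cp_not_edge[of i u i v d V E] u_ne_v
    by blast
  ultimately have "S (Cp i u) \<subseteq> S (Cp i v) \<or> S (Cp i v) \<subseteq> S (Cp i u)"
    unfolding overlap_def by blast
  moreover have "\<not> S (Cp i w) \<subseteq> S (Cp i w')" if "w \<in> {u, v}" "w' \<in> {u, v}" "w \<noteq> w'" for w w'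
  proof
    assume sub: "S (Cp i w) \<subseteq> S (Cp i w')"
    have w: "w \<in> V" "w' \<in> V" using that uv by auto
    have "z \<in> S (Fv i w)" using z(2) Fv_in_blocked_V3[OF i w(1)] by simp
    moreover have "z \<notin> S (Cp i w')" using avoid that by auto
    ultimately have "overlap (S (Cp i w')) (S (Fv i w))"
      using copy_overlaps_twin[OF i w(1)] sub unfolding overlap_def by blast
    moreover have "\<not> overlap (S (Cp i w')) (S (Fv i w))"
      using copy_overlaps_other(2)[OF i w(2) i w(1)] that(3) by simp
    ultimately show False by simp
  qed
  ultimately show False using u_ne_v by blast
qed

lemma colourable_by_leaves:
  assumes L: "card (leaves N F) = d" and d: "d \<ge> 3"
    and gap: "\<forall>v\<in>N. \<not> (2 < degree F v \<and> degree F v < d)"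
  shows "colourable d V E"
proof -
  obtain z where z: "z \<in> N" "\<forall>x\<in>blocked_V2 E \<union> blocked_V3 V. z \<in> S x"
    using clique_common_node by blast
  interpret rooted_tree N F z using tree z(1) by unfold_locales
  obtain b where b: "\<forall>x\<in>N. 3 \<le> degree F x \<longrightarrow> x = b"
    using tree_unique_branch_node[OF tree L d gap] by blast
  obtain i where i: "i < 6" "\<forall>v\<in>V. z \<notin> S (Cp i v) \<and> b \<notin> S (Cp i v)"
    using copy_avoiding_nodes by blast
  have "\<exists>l\<in>leaves N F. \<forall>x\<in>S (Cp i v). ancestor x l" if v: "v \<in> V" for v
  proof (rule subtree_below_leaf)
    show X: "subtree N F (S (Cp i v))" using subtree_S[OF Cp_in_blocked_V[OF i(1) v]] .
    show "z \<notin> S (Cp i v)" using i v by blast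
    show "\<forall>w\<in>S (Cp i v). degree F w \<le> 2"
      using b i v subtree_nodes[OF X] by (metis not_less_eq_eq numeral_2_eq_2 numeral_3_eq_3 subsetD)
  qed
  then obtain leaf
    where leaf: "\<forall>v\<in>V. leaf v \<in> leaves N F \<and> (\<forall>x\<in>S (Cp i v). ancestor x (leaf v))"
    by metis
  show ?thesis
  proof (rule colourableI_map[OF _ L])
    show "finite (leaves N F)" using finite_nodes unfolding leaves_def by simp
    show "\<forall>v\<in>V. leaf v \<in> leaves N F" using leaf by blast
    show "\<forall>u\<in>V. \<forall>v\<in>V. {u, v} \<in> E \<longrightarrow> leaf u \<noteq> leaf v"
    proof (intro ballI impI notI)
      fix u v assume uv: "u \<in> V" "v \<in> V" "{u, v} \<in> E" "leaf u = leaf v"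
      show False
      proof (rule adjacent_copies_diverge[OF z i(1) uv(1-3)])
        show "z \<notin> S (Cp i u)" "z \<notin> S (Cp i v)" using i uv by auto
        show "leaf u \<in> N" using leaf uv(1) unfolding leaves_def by auto
        show "\<forall>x\<in>S (Cp i u) \<union> S (Cp i v). ancestor x (leaf u)" using leaf uv by auto
      qed
    qed
  qed
qed

end

theorem lemma6:
  fixes V :: "'a set" and E :: "'a set set" and d :: nat
    and N :: "'n set" and F :: "'n set set"
  assumes "simple_graph V E"
    and "k_connected 3 V E"
    and "d \<ge> 3"
    and "is_tree N F"
    and "card (leaves N F) = d"
    and "\<forall>v\<in>N. \<not> (2 < degree F v \<and> degree F v < d)"
    and "overlap_graph_of_subtrees (blocked_V d V E) (blocked_E d V E) N F"
  shows "colourable d V E"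
proof -
  obtain S :: "'a bvert \<Rightarrow> 'n set" where "\<forall>x\<in>blocked_V d V E. subtree N F (S x)"
    and "\<forall>x\<in>blocked_V d V E. \<forall>y\<in>blocked_V d V E. x \<noteq> y \<longrightarrow>
        ({x, y} \<in> blocked_E d V E \<longleftrightarrow> overlap (S x) (S y))"
    using assms(7) unfolding overlap_graph_of_subtrees_def by blast
  then interpret blocked_subtree_model d V E N F S
    using assms(1,4) by unfold_locales auto
  show ?thesis using colourable_by_leaves assms(3,5,6) by blast
qed

end
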